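(* Let $G$ be a finite group of nilpotence class $n\leq 2$, and let $S$ be a commutative semiring without non-zero zero-divisors and without zero sums. Then the group semiring $SG$ is centrally essential.
   Context: A semiring is a set $S$ with two binary operations $+$ and $\cdot$ such that $(S,+)$ is a commutative monoid with neutral element $0$, $(S,\cdot)$ is a monoid with identity $1$, multiplication distributes over addition on both sides, and $0s=s0=0$ for all $s\in S$. $S$ has no zero sums if $a+b=0$ implies $a=b=0$. The group semiring $SG$ consists of formal sums $\sum_{g\in G} s_g g$ with $s_g\in S$, with componentwise addition and multiplication $(\sum s_g g)(\sum t_h h)=\sum_{k}\big(\sum_{gh=k} s_g t_h\big)k$. The center of a semiring $R$ is $C(R)=\{r: rr'=r'r\ \forall r'\in R\}$; $R$ is centrally essential if for every non-zero $x\in R$ there exist non-zero $y,z\in C(R)$ with $xy=z$. The upper central series of $G$ is $\{e\}=C_0(G)\subseteq C_1(G)\subseteq\cdots$ where $C_i(G)/C_{i-1}(G)$ is the center of $G/C_{i-1}(G)$; the nilpotence class of $G$ is the least positive integer $n$ with $C_n(G)=G$. *)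

theory Defs
  imports "HOL-Algebra.Algebra"
begin

definition group_center :: "('g, 'b) monoid_scheme \<Rightarrow> 'g set" where
  "group_center G = {z \<in> carrier G. \<forall>g \<in> carrier G. z \<otimes>\<^bsub>G\<^esub> g = g \<otimes>\<^bsub>G\<^esub> z}"

fun upper_central :: "('g, 'b) monoid_scheme \<Rightarrow> nat \<Rightarrow> 'g set" where
  "upper_central G 0 = {\<one>\<^bsub>G\<^esub>}"
| "upper_central G (Suc i) =
     {g \<in> carrier G. upper_central G i #>\<^bsub>G\<^esub> g \<in> group_center (G Mod upper_central G i)}"

definition nilpotent_grp :: "('g, 'b) monoid_scheme \<Rightarrow> bool" where
  "nilpotent_grp G = (\<exists>n. 0 < n \<and> upper_central G n = carrier G)"

text \<open>Nilpotence class (meaningful for nilpotent groups): least positive n with C_n(G) = G.\<close>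
definition nilpotence_class :: "('g, 'b) monoid_scheme \<Rightarrow> nat" where
  "nilpotence_class G = (LEAST n. 0 < n \<and> upper_central G n = carrier G)"

text \<open>Elements of SG: functions from the group to S, vanishing outside the carrier
  (for finite G every such function is a finite formal sum).\<close>
definition gsr_carrier :: "('g, 'b) monoid_scheme \<Rightarrow> ('g \<Rightarrow> 's::comm_semiring_1) set" where
  "gsr_carrier G = {x. \<forall>g. g \<notin> carrier G \<longrightarrow> x g = 0}"

definition gsr_mult :: "('g, 'b) monoid_scheme \<Rightarrow> ('g \<Rightarrow> 's::comm_semiring_1) \<Rightarrow> ('g \<Rightarrow> 's) \<Rightarrow> ('g \<Rightarrow> 's)" where
  "gsr_mult G x y = (\<lambda>k. if k \<in> carrier G then
      (\<Sum>(g, h) \<in> {(g, h). g \<in> carrier G \<and> h \<in> carrier G \<and> g \<otimes>\<^bsub>G\<^esub> h = k}. x g * y h)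
    else 0)"

definition gsr_center :: "('g, 'b) monoid_scheme \<Rightarrow> ('g \<Rightarrow> 's::comm_semiring_1) set" where
  "gsr_center G = {r \<in> gsr_carrier G. \<forall>r' \<in> gsr_carrier G. gsr_mult G r r' = gsr_mult G r' r}"

definition gsr_centrally_essential :: "('g, 'b) monoid_scheme \<Rightarrow> ('g \<Rightarrow> 's::comm_semiring_1) itself \<Rightarrow> bool" where
  "gsr_centrally_essential G _ = (\<forall>x \<in> (gsr_carrier G :: ('g \<Rightarrow> 's) set). x \<noteq> (\<lambda>_. 0) \<longrightarrow>
     (\<exists>y \<in> gsr_center G. \<exists>z \<in> gsr_center G. y \<noteq> (\<lambda>_. 0) \<and> z \<noteq> (\<lambda>_. 0) \<and> gsr_mult G x y = z))"

end

theory Submission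
  imports Defs
begin

(* The sum of all group elements is central in SG, and multiplying any x by it gives
   eps(x) times the same sum, where eps is the augmentation (sum of the coefficients).
   Over a semiring without zero sums, eps(x) = 0 forces x = 0, so this one central element
   witnesses central essentiality for every non-zero x. *)

definition gsr_const :: "('g, 'b) monoid_scheme \<Rightarrow> 's::comm_semiring_1 \<Rightarrow> 'g \<Rightarrow> 's" where
  "gsr_const G c = (\<lambda>k. if k \<in> carrier G then c else 0)"

definition augmentation :: "('g, 'b) monoid_scheme \<Rightarrow> ('g \<Rightarrow> 's::comm_semiring_1) \<Rightarrow> 's" where
  "augmentation G x = (\<Sum>g\<in>carrier G. x g)"

lemma (in group) mult_fibre_eq_image_left:
  assumes "k \<in> carrier G"
  shows "{(g, h). g \<in> carrier G \<and> h \<in> carrier G \<and> g \<otimes> h = k} = (\<lambda>g. (g, inv g \<otimes> k)) ` carrier G"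
  using assms by (auto simp: inv_solve_left m_assoc[symmetric])

lemma (in group) mult_fibre_eq_image_right:
  assumes "k \<in> carrier G"
  shows "{(g, h). g \<in> carrier G \<and> h \<in> carrier G \<and> g \<otimes> h = k} = (\<lambda>h. (k \<otimes> inv h, h)) ` carrier G"
  using assms by (auto simp: m_assoc intro!: image_eqI)

lemma (in group) gsr_mult_apply_left:
  assumes "k \<in> carrier G"
  shows "gsr_mult G x y k = (\<Sum>g\<in>carrier G. x g * y (inv g \<otimes> k))"
proof -
  have "inj_on (\<lambda>g. (g, inv g \<otimes> k)) (carrier G)"
    by (rule inj_onI) simp
  then show ?thesis
    using assms by (simp add: gsr_mult_def mult_fibre_eq_image_left sum.reindex)
qed

lemma (in group) gsr_mult_apply_right:
  assumes "k \<in> carrier G"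
  shows "gsr_mult G x y k = (\<Sum>h\<in>carrier G. x (k \<otimes> inv h) * y h)"
proof -
  have "inj_on (\<lambda>h. (k \<otimes> inv h, h)) (carrier G)"
    by (rule inj_onI) simp
  then show ?thesis
    using assms by (simp add: gsr_mult_def mult_fibre_eq_image_right sum.reindex)
qed

lemma (in group) gsr_mult_const_right:
  "gsr_mult G x (gsr_const G c) = gsr_const G (augmentation G x * c)"
proof
  fix k
  show "gsr_mult G x (gsr_const G c) k = gsr_const G (augmentation G x * c) k"
  proof (cases "k \<in> carrier G")
    case True
    then have "gsr_mult G x (gsr_const G c) k = (\<Sum>g\<in>carrier G. x g * c)"
      by (simp add: gsr_mult_apply_left gsr_const_def)
    with True show ?thesis
      by (simp add: gsr_const_def augmentation_def sum_distrib_right)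
  qed (simp add: gsr_mult_def gsr_const_def)
qed

lemma (in group) gsr_mult_const_left:
  "gsr_mult G (gsr_const G c) x = gsr_const G (augmentation G x * c)"
proof
  fix k
  show "gsr_mult G (gsr_const G c) x k = gsr_const G (augmentation G x * c) k"
  proof (cases "k \<in> carrier G")
    case True
    then have "gsr_mult G (gsr_const G c) x k = (\<Sum>h\<in>carrier G. c * x h)"
      by (simp add: gsr_mult_apply_right gsr_const_def)
    with True show ?thesis
      by (simp add: gsr_const_def augmentation_def sum_distrib_left mult.commute)
  qed (simp add: gsr_mult_def gsr_const_def)
qed

lemma (in group) gsr_const_in_center: "gsr_const G c \<in> gsr_center G"
proof -
  have "gsr_const G c \<in> gsr_carrier G"
    by (simp add: gsr_carrier_def gsr_const_def)
  then show ?thesis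
    by (simp add: gsr_center_def gsr_mult_const_left gsr_mult_const_right)
qed

lemma (in group) gsr_const_eq_zero_iff: "gsr_const G c = (\<lambda>_. 0) \<longleftrightarrow> c = 0"
  unfolding gsr_const_def fun_eq_iff by (metis one_closed)

lemma sum_eq_zero_iff_no_zero_sums:
  fixes f :: "'a \<Rightarrow> 's::comm_monoid_add"
  assumes no_zero_sums: "\<And>a b :: 's. a + b = 0 \<Longrightarrow> a = 0 \<and> b = 0"
    and "finite A"
  shows "sum f A = 0 \<longleftrightarrow> (\<forall>x\<in>A. f x = 0)"
  using \<open>finite A\<close> by induction (auto dest: no_zero_sums)

lemma augmentation_eq_zero_iff:
  assumes no_zero_sums: "\<And>a b :: 's::comm_semiring_1. a + b = 0 \<Longrightarrow> a = 0 \<and> b = 0"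
    and "finite (carrier G)" and "x \<in> gsr_carrier G"
  shows "augmentation G x = (0::'s) \<longleftrightarrow> x = (\<lambda>_. 0)"
proof -
  have "augmentation G x = 0 \<longleftrightarrow> (\<forall>g\<in>carrier G. x g = 0)"
    unfolding augmentation_def using no_zero_sums \<open>finite (carrier G)\<close>
    by (rule sum_eq_zero_iff_no_zero_sums)
  also have "\<dots> \<longleftrightarrow> x = (\<lambda>_. 0)"
    using \<open>x \<in> gsr_carrier G\<close> by (auto simp: gsr_carrier_def)
  finally show ?thesis .
qed

lemma gsr_centrally_essential_if_no_zero_sums:
  assumes "group G" and "finite (carrier G)"
    and no_zero_sums: "\<And>a b :: 's::comm_semiring_1. a + b = 0 \<Longrightarrow> a = 0 \<and> b = 0"
  shows "gsr_centrally_essential G TYPE('g \<Rightarrow> 's)"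
  unfolding gsr_centrally_essential_def
proof (intro ballI impI)
  interpret group G by fact
  fix x :: "'g \<Rightarrow> 's"
  assume "x \<in> gsr_carrier G" and "x \<noteq> (\<lambda>_. 0)"
  then have "augmentation G x \<noteq> 0"
    using augmentation_eq_zero_iff[OF no_zero_sums \<open>finite (carrier G)\<close>] by blast
  then have "gsr_const G 1 \<noteq> (\<lambda>_. 0)" "gsr_const G (augmentation G x) \<noteq> (\<lambda>_. 0)"
    by (simp_all add: gsr_const_eq_zero_iff)
  moreover have "gsr_mult G x (gsr_const G 1) = gsr_const G (augmentation G x)"
    by (simp add: gsr_mult_const_right)
  ultimately show "\<exists>y\<in>gsr_center G. \<exists>z\<in>gsr_center G.
      y \<noteq> (\<lambda>_. 0) \<and> z \<noteq> (\<lambda>_. 0) \<and> gsr_mult G x y = z"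
    using gsr_const_in_center by blast
qed

theorem proposition3p1:
  fixes G :: "('g, 'b) monoid_scheme"
  assumes "group G" and "finite (carrier G)"
    and "nilpotent_grp G" and "nilpotence_class G \<le> 2"
    and "\<And>a b :: 's::{comm_semiring_1, semiring_no_zero_divisors}. a + b = 0 \<Longrightarrow> a = 0 \<and> b = 0"
  shows "gsr_centrally_essential G TYPE('g \<Rightarrow> 's)"
  using assms(1,2,5) by (rule gsr_centrally_essential_if_no_zero_sums)

end
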